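(* Let $0=t_0<t_1<\dots<t_K$, $J_i=(t_{i-1},t_i]$, $\tau_i=t_i-t_{i-1}$, $X_i=C(J_i;\ell^1_\omega)$ with $\|a\|_{X_i}=\sup_{t\in J_i}\|a(t)\|_\omega$, $\gamma\in[0,1)$, $\hat\tau_i=\tau_i^{1-\gamma}/(1-\gamma)$. For each $i$ let $U_{J_i}(t,s)$, $t_{i-1}\le s\le t\le t_i$, be a family of bounded linear operators (the evolution operator of $\dot b=\mathcal Lb+\mathcal QD\mathcal N(\bar a^{J_i}(t))b$) and suppose there are positive constants with, for all $\phi,\psi\in\ell^1_\omega$: $\|U_{J_i}(t,s)\phi\|_\omega\le W^{S}_i\|\phi\|_\omega$ and $(t-s)^\gamma\|U_{J_i}(t,s)\mathcal Q\psi\|_\omega\le W^{S}_{q,i}\|\psi\|_\omega$ for $t_{i-1}\le s<t\le t_i$; $\|U_{J_i}(t_i,s)\phi\|_\omega\le W^{(t_i,J_i)}\|\phi\|_\omega$ and $(t_i-s)^\gamma\|U_{J_i}(t_i,s)\mathcal Q\psi\|_\omega\le W^{(t_i,J_i)}_q\|\psi\|_\omega$ for $s\in[t_{i-1},t_i)$; $\|U_{J_i}(t_i,t_{i-1})\phi\|_\omega\le W^{(t_i,t_{i-1})}\|\phi\|_\omega$. For $0\le j\le i$ set $W^{(t_i,t_j)}=W^{(t_i,t_{i-1})}\cdots W^{(t_{j+1},t_j)}$ (with $W^{(t_i,t_i)}=1$). Let $\mathbf W_\ell,\mathbf W_X,\mathbf W_Y$ be the matrix infinity norms (maximum absolute row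 sums) of the lower triangular $K\times K$ matrices with entries, for $1\le j\le i\le K$: $(M_\ell)_{ij}=W^S_iW^{(t_{i-1},t_{j-1})}$; $(M_X)_{ii}=\hat\tau_iW^S_{q,i}$ and $(M_X)_{ij}=\hat\tau_jW^S_iW^{(t_{i-1},t_j)}W_q^{(t_j,J_j)}$ for $j<i$; $(M_Y)_{ii}=\tau_iW^S_i$ and $(M_Y)_{ij}=\tau_jW^S_iW^{(t_{i-1},t_j)}W^{(t_j,J_j)}$ for $j<i$. Given $\phi^{J_i}\in\ell^1_\omega$ and $\psi^{J_i},p^{J_i}\in X_i$ ($i=1,\dots,K$), define recursively, with $h^{J_0}(t_0):=0$, $h^{J_i}(t)=U_{J_i}(t,t_{i-1})\big(\phi^{J_i}+h^{J_{i-1}}(t_{i-1})\big)+\int_{t_{i-1}}^tU_{J_i}(t,s)\big(\mathcal Q\psi^{J_i}(s)+p^{J_i}(s)\big)ds$, $t\in J_i$. Then $\max_i\|h^{J_i}\|_{X_i}\le\mathbf W_\ell\max_i\|\phi^{J_i}\|_\omega+\mathbf W_X\max_i\|\psi^{J_i}\|_{X_i}+\mathbf W_Y\max_i\|p^{J_i}\|_{X_i}$.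
   Context: Standing setting. Fix $d\ge1$ and $L_1,\dots,L_d>0$. Multi-indices are $\mathbf k=(k_1,\dots,k_d)\in\mathbb Z_{\ge0}^d$. Let $\alpha_{\mathbf k}=2^{\delta_{k_1,0}}\cdots2^{\delta_{k_d,0}}$, fix $\nu_F\ge1$, and set $\omega_{\mathbf k}=\alpha_{\mathbf k}\nu_F^{k_1+\cdots+k_d}$. $\ell^1_\omega$ is the Banach space of real sequences $a=(a_{\mathbf k})_{\mathbf k\ge0}$ with $\|a\|_\omega=\sum_{\mathbf k\ge0}|a_{\mathbf k}|\omega_{\mathbf k}<\infty$. Let $(\mathbf{kL})=((k_1L_1)^2+\cdots+(k_dL_d)^2)^{1/2}$. For given real $\lambda_0,\lambda_1,\lambda_2$ let $\mu_{\mathbf k}=\lambda_0-\lambda_1(\mathbf{kL})^2+\lambda_2(\mathbf{kL})^4$ and let $\mathcal L$ be the diagonal operator $(\mathcal L\phi)_{\mathbf k}=\mu_{\mathbf k}\phi_{\mathbf k}$. Fix $q\in\{0,2\}$ and let $(\mathcal Q\phi)_{\mathbf k}=\mathrm i^q(\mathbf{kL})^q\phi_{\mathbf k}$. $\mathcal N:\ell^1_\omega\to\ell^1_\omega$ is Fréchet differentiable with $\mathcal N(0)=0$, $D\mathcal N(0)=0$. For each $i$, $\bar a^{J_i}\in X_i$ is a given approximate solution on $J_i$. The evolution operators satisfy $U_{J_i}(s,s)=I$ and $U_{J_i}(t,r)U_{J_i}(r,s)=U_{J_i}(t,s)$. *)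

theory Defs
  imports "HOL-Analysis.Analysis"
begin

text \<open>Real sequences indexed by multi-indices k in Z_{>=0}^d; the dimension d is
  the cardinality of the finite index type 'd.\<close>
type_synonym 'd seq = "('d \<Rightarrow> nat) \<Rightarrow> real"

definition alpha :: "('d::finite \<Rightarrow> nat) \<Rightarrow> real" where
  "alpha k = (\<Prod>m\<in>UNIV. (2::real) ^ (if k m = 0 then 1 else 0))"

definition omega :: "real \<Rightarrow> ('d::finite \<Rightarrow> nat) \<Rightarrow> real" where
  "omega \<nu>F k = alpha k * \<nu>F ^ (\<Sum>m\<in>UNIV. k m)"

definition wnorm :: "real \<Rightarrow> 'd::finite seq \<Rightarrow> ennreal" where
  "wnorm \<nu>F a = (\<Sum>\<^sub>\<infinity>k. ennreal (\<bar>a k\<bar> * omega \<nu>F k))"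

definition in_l1w :: "real \<Rightarrow> 'd::finite seq \<Rightarrow> bool" where
  "in_l1w \<nu>F a \<longleftrightarrow> wnorm \<nu>F a < \<infinity>"

definition kLnorm :: "('d::finite \<Rightarrow> real) \<Rightarrow> ('d \<Rightarrow> nat) \<Rightarrow> real" where
  "kLnorm L k = sqrt (\<Sum>m\<in>UNIV. (real (k m) * L m)^2)"

text \<open>(Q phi)_k = i^q (kL)^q phi_k; for q in {0,2} this is real.\<close>
definition Qop :: "nat \<Rightarrow> ('d::finite \<Rightarrow> real) \<Rightarrow> 'd seq \<Rightarrow> 'd seq" where
  "Qop q L \<phi> = (\<lambda>k. Re (\<i> ^ q) * kLnorm L k ^ q * \<phi> k)"

definition Jint :: "(nat \<Rightarrow> real) \<Rightarrow> nat \<Rightarrow> real set" where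
  "Jint tg i = {tg (i - 1)<..tg i}"

definition tau :: "(nat \<Rightarrow> real) \<Rightarrow> nat \<Rightarrow> real" where
  "tau tg i = tg i - tg (i - 1)"

definition tauhat :: "(nat \<Rightarrow> real) \<Rightarrow> real \<Rightarrow> nat \<Rightarrow> real" where
  "tauhat tg \<gamma> i = tau tg i powr (1 - \<gamma>) / (1 - \<gamma>)"

definition in_C :: "real \<Rightarrow> real set \<Rightarrow> (real \<Rightarrow> 'd::finite seq) \<Rightarrow> bool" where
  "in_C \<nu>F J f \<longleftrightarrow> (\<forall>s\<in>J. in_l1w \<nu>F (f s)) \<and>
     (\<forall>s\<in>J. \<forall>\<epsilon>>0. \<exists>\<delta>>0. \<forall>s'\<in>J. \<bar>s' - s\<bar> < \<delta> \<longrightarrow>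
        wnorm \<nu>F (\<lambda>k. f s' k - f s k) < ennreal \<epsilon>)"

definition Xnorm :: "real \<Rightarrow> real set \<Rightarrow> (real \<Rightarrow> 'd::finite seq) \<Rightarrow> ennreal" where
  "Xnorm \<nu>F J f = (SUP s\<in>J. wnorm \<nu>F (f s))"

definition Wprod :: "(nat \<Rightarrow> real) \<Rightarrow> nat \<Rightarrow> nat \<Rightarrow> real" where
  "Wprod Wstep i j = (\<Prod>m\<in>{j<..i}. Wstep m)"

definition infnorm :: "nat \<Rightarrow> (nat \<Rightarrow> nat \<Rightarrow> real) \<Rightarrow> real" where
  "infnorm K M = Max ((\<lambda>i. \<Sum>j\<in>{1..K}. \<bar>M i j\<bar>) ` {1..K})"

definition Ml :: "(nat \<Rightarrow> real) \<Rightarrow> (nat \<Rightarrow> real) \<Rightarrow> nat \<Rightarrow> nat \<Rightarrow> real" where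
  "Ml WS Wstep i j = (if j \<le> i then WS i * Wprod Wstep (i - 1) (j - 1) else 0)"

definition MX :: "(nat \<Rightarrow> real) \<Rightarrow> (nat \<Rightarrow> real) \<Rightarrow> (nat \<Rightarrow> real) \<Rightarrow> (nat \<Rightarrow> real)
    \<Rightarrow> (nat \<Rightarrow> real) \<Rightarrow> nat \<Rightarrow> nat \<Rightarrow> real" where
  "MX th WSq WS Wstep Wendq i j =
     (if j = i then th i * WSq i
      else if j < i then th j * WS i * Wprod Wstep (i - 1) j * Wendq j else 0)"

definition MY :: "(nat \<Rightarrow> real) \<Rightarrow> (nat \<Rightarrow> real) \<Rightarrow> (nat \<Rightarrow> real)
    \<Rightarrow> (nat \<Rightarrow> real) \<Rightarrow> nat \<Rightarrow> nat \<Rightarrow> real" where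
  "MY ta WS Wstep Wend i j =
     (if j = i then ta i * WS i
      else if j < i then ta j * WS i * Wprod Wstep (i - 1) j * Wend j else 0)"

text \<open>The recursively defined h^{J_i}; h^{J_0} = 0. The l^1_omega-valued integral is
  taken coordinatewise (coordinate functionals are continuous on l^1_omega).\<close>
fun hJ :: "(nat \<Rightarrow> real \<Rightarrow> real \<Rightarrow> 'd seq \<Rightarrow> 'd seq) \<Rightarrow> (nat \<Rightarrow> real) \<Rightarrow> ('d seq \<Rightarrow> 'd seq)
    \<Rightarrow> (nat \<Rightarrow> 'd seq) \<Rightarrow> (nat \<Rightarrow> real \<Rightarrow> 'd seq) \<Rightarrow> (nat \<Rightarrow> real \<Rightarrow> 'd seq)
    \<Rightarrow> nat \<Rightarrow> real \<Rightarrow> 'd seq" where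
  "hJ U tg Q \<phi> \<psi> p 0 = (\<lambda>t k. 0)"
| "hJ U tg Q \<phi> \<psi> p (Suc i) = (\<lambda>t k.
      U (Suc i) t (tg i) (\<lambda>m. \<phi> (Suc i) m + hJ U tg Q \<phi> \<psi> p i (tg i) m) k
    + integral {tg i..t} (\<lambda>s. U (Suc i) t s (\<lambda>m. Q (\<psi> (Suc i) s) m + p (Suc i) s m) k))"

end

(*
  On J_i the free part is controlled by W^S_i, and the
  integral by the pointwise bound W^S_{q,i} (t - s)^{-gamma} |psi| + W^S_i |p| on the integrand,
  whose integral over [t_{i-1}, t] is at most hat tau_i W^S_{q,i} |psi| + tau_i W^S_i |p|.
  At the right end point the same argument with the end-point constants gives a recursion
  E_i = W^{(t_i,t_{i-1})} (|phi| + E_{i-1}) + ... for a bound E_i on h^{J_i}(t_i). Unrolled,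
  E_{i-1} is a sum of products W^{(t_{i-1},t_j)}, and the bound on J_i becomes exactly the
  weighted i-th row sums of M_l, M_X and M_Y, hence at most their infinity norms.
*)

theory Submission
  imports Defs
begin

lemma has_integral_powr_neg:
  fixes a t \<gamma> :: real
  assumes "0 \<le> \<gamma>" "\<gamma> < 1" "a \<le> t"
  shows "((\<lambda>s. (t - s) powr (- \<gamma>)) has_integral (t - a) powr (1 - \<gamma>) / (1 - \<gamma>)) {a..t}"
proof -
  define F where "F s = - (1 / (1 - \<gamma>)) * (t - s) powr (1 - \<gamma>)" for s
  have "continuous_on {a..t} F"
    unfolding F_def using assms by (intro continuous_intros continuous_on_powr') auto
  moreover have "(F has_vector_derivative (t - s) powr (- \<gamma>)) (at s)" if "s \<in> {a<..<t}" for s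
  proof -
    have "((\<lambda>s. (t - s) powr (1 - \<gamma>)) has_real_derivative
        (1 - \<gamma>) * (t - s) powr (1 - \<gamma> - 1) * (- 1)) (at s)"
      using that by (intro DERIV_fun_powr derivative_eq_intros) auto
    then have "(F has_real_derivative
        - (1 / (1 - \<gamma>)) * ((1 - \<gamma>) * (t - s) powr (1 - \<gamma> - 1) * (- 1))) (at s)"
      unfolding F_def by (rule DERIV_cmult)
    then show ?thesis
      using assms by (simp add: has_real_derivative_iff_has_vector_derivative)
  qed
  ultimately have "((\<lambda>s. (t - s) powr (- \<gamma>)) has_integral (F t - F a)) {a..t}"
    using assms(3) by (intro fundamental_theorem_of_calculus_interior)
  then show ?thesis by (simp add: F_def)
qed

lemma omega_nonneg: "0 \<le> \<nu>F \<Longrightarrow> 0 \<le> omega \<nu>F k"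
  unfolding omega_def alpha_def by (intro mult_nonneg_nonneg prod_nonneg) auto

lemma sum_le_wnorm:
  assumes "finite F"
  shows "(\<Sum>k\<in>F. ennreal (\<bar>a k\<bar> * omega \<nu>F k)) \<le> wnorm \<nu>F a"
proof -
  have "(\<Sum>k\<in>F. ennreal (\<bar>a k\<bar> * omega \<nu>F k)) = (\<Sum>\<^sub>\<infinity>k\<in>F. ennreal (\<bar>a k\<bar> * omega \<nu>F k))"
    using assms by simp
  also have "\<dots> \<le> wnorm \<nu>F a"
    unfolding wnorm_def by (rule infsum_mono_neutral) (auto intro: nonneg_summable_on_complete)
  finally show ?thesis .
qed

lemma wnorm_add_le:
  assumes "0 \<le> \<nu>F"
  shows "wnorm \<nu>F (\<lambda>k. a k + b k) \<le> wnorm \<nu>F a + wnorm \<nu>F b"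
proof -
  have "ennreal (\<bar>a k + b k\<bar> * omega \<nu>F k)
      \<le> ennreal (\<bar>a k\<bar> * omega \<nu>F k) + ennreal (\<bar>b k\<bar> * omega \<nu>F k)" for k
    using omega_nonneg[OF assms, of k]
    by (simp add: ennreal_plus[symmetric] ennreal_leI mult_right_mono distrib_right[symmetric]
        del: ennreal_plus)
  then have "wnorm \<nu>F (\<lambda>k. a k + b k)
      \<le> (\<Sum>\<^sub>\<infinity>k. ennreal (\<bar>a k\<bar> * omega \<nu>F k) + ennreal (\<bar>b k\<bar> * omega \<nu>F k))"
    unfolding wnorm_def by (intro infsum_mono) (auto intro: nonneg_summable_on_complete)
  also have "\<dots> = wnorm \<nu>F a + wnorm \<nu>F b"
    unfolding wnorm_def by (rule infsum_add) (auto intro: nonneg_summable_on_complete)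
  finally show ?thesis .
qed

lemma sum_abs_integral_le:
  fixes F :: "real \<Rightarrow> 'd::finite seq"
  assumes nu: "0 \<le> \<nu>F" and fin: "finite FF" and G: "G integrable_on {a..t}"
    and G_nonneg: "\<And>s. s \<in> {a..t} \<Longrightarrow> 0 \<le> G s"
    and bound: "\<And>s. s \<in> {a<..<t} \<Longrightarrow> wnorm \<nu>F (F s) \<le> ennreal (G s)"
  shows "(\<Sum>k\<in>FF. \<bar>integral {a..t} (\<lambda>s. F s k)\<bar> * omega \<nu>F k) \<le> integral {a..t} G"
proof -
  define I where "I k = integral {a..t} (\<lambda>s. F s k)" for k
  define H where "H s = (if s \<in> {a<..<t} then \<Sum>k\<in>FF. sgn (I k) * omega \<nu>F k * F s k else 0)" for s
  \<comment> \<open>A coordinate that is not integrable has integral \<open>0\<close> and contributes nothing; hence no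
    measurability of the integrand is needed.\<close>
  have coord: "((\<lambda>s. sgn (I k) * omega \<nu>F k * F s k) has_integral \<bar>I k\<bar> * omega \<nu>F k) {a..t}" for k
  proof (cases "(\<lambda>s. F s k) integrable_on {a..t}")
    case True
    then have "((\<lambda>s. sgn (I k) * omega \<nu>F k * F s k)
        has_integral sgn (I k) * omega \<nu>F k * I k) {a..t}"
      unfolding I_def by (intro has_integral_mult_right integrable_integral)
    then show ?thesis by (simp add: abs_sgn mult_ac)
  next
    case False
    then show ?thesis by (simp add: I_def not_integrable_integral)
  qed
  have "((\<lambda>s. \<Sum>k\<in>FF. sgn (I k) * omega \<nu>F k * F s k) has_integral
      (\<Sum>k\<in>FF. \<bar>I k\<bar> * omega \<nu>F k)) {a..t}"
    using fin coord by (rule has_integral_sum)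
  then have H_int: "(H has_integral (\<Sum>k\<in>FF. \<bar>I k\<bar> * omega \<nu>F k)) {a..t}"
    by (rule has_integral_spike_finite[of "{a, t}", rotated 2]) (auto simp: H_def)
  have "H s \<le> G s" if s: "s \<in> {a..t}" for s
  proof (cases "s \<in> {a<..<t}")
    case True
    have "(\<Sum>k\<in>FF. sgn (I k) * omega \<nu>F k * F s k) \<le> (\<Sum>k\<in>FF. \<bar>F s k\<bar> * omega \<nu>F k)"
    proof (rule sum_mono)
      fix k
      have "sgn (I k) * F s k \<le> \<bar>F s k\<bar>" by (auto simp: sgn_if)
      then show "sgn (I k) * omega \<nu>F k * F s k \<le> \<bar>F s k\<bar> * omega \<nu>F k"
        using omega_nonneg[OF nu, of k] by (metis mult.commute mult.left_commute mult_right_mono)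
    qed
    moreover have "ennreal (\<Sum>k\<in>FF. \<bar>F s k\<bar> * omega \<nu>F k) \<le> ennreal (G s)"
      using sum_le_wnorm[OF fin, of "F s" \<nu>F] bound[OF True] omega_nonneg[OF nu]
      by (subst sum_ennreal[symmetric]) (auto intro!: mult_nonneg_nonneg)
    ultimately show ?thesis
      using G_nonneg[OF s] by (simp add: H_def True ennreal_le_iff)
  qed (auto simp: H_def G_nonneg[OF s])
  then have "(\<Sum>k\<in>FF. \<bar>I k\<bar> * omega \<nu>F k) \<le> integral {a..t} G"
    using integral_le[OF has_integral_integrable[OF H_int] G] H_int by (simp add: integral_unique)
  then show ?thesis by (simp add: I_def)
qed

lemma wnorm_integral_le:
  fixes F :: "real \<Rightarrow> 'd::finite seq"
  assumes "0 \<le> \<nu>F" "G integrable_on {a..t}" "\<And>s. s \<in> {a..t} \<Longrightarrow> 0 \<le> G s"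
    and "\<And>s. s \<in> {a<..<t} \<Longrightarrow> wnorm \<nu>F (F s) \<le> ennreal (G s)"
  shows "wnorm \<nu>F (\<lambda>k. integral {a..t} (\<lambda>s. F s k)) \<le> ennreal (integral {a..t} G)"
  unfolding wnorm_def
proof (rule infsum_le_finite_sums)
  fix FF :: "('d \<Rightarrow> nat) set"
  assume "finite FF"
  then have "(\<Sum>k\<in>FF. \<bar>integral {a..t} (\<lambda>s. F s k)\<bar> * omega \<nu>F k) \<le> integral {a..t} G"
    by (rule sum_abs_integral_le[OF assms(1) _ assms(2-4)])
  then show "(\<Sum>k\<in>FF. ennreal (\<bar>integral {a..t} (\<lambda>s. F s k)\<bar> * omega \<nu>F k))
      \<le> ennreal (integral {a..t} G)"
    using omega_nonneg[OF assms(1)]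
    by (subst sum_ennreal) (auto intro!: ennreal_leI mult_nonneg_nonneg)
qed (auto intro: nonneg_summable_on_complete)

lemma wnorm_le_Max_Xnorm:
  assumes "finite I" "i \<in> I" "s \<in> J i"
  shows "wnorm \<nu>F (f i s) \<le> Max ((\<lambda>i. Xnorm \<nu>F (J i) (f i)) ` I)"
proof -
  have "wnorm \<nu>F (f i s) \<le> Xnorm \<nu>F (J i) (f i)"
    unfolding Xnorm_def using assms(3) by (rule SUP_upper)
  also have "\<dots> \<le> Max ((\<lambda>i. Xnorm \<nu>F (J i) (f i)) ` I)"
    using assms(1,2) by (intro Max_ge) auto
  finally show ?thesis .
qed

lemma in_l1w_if_wnorm_le: "wnorm \<nu>F y \<le> ennreal r \<Longrightarrow> in_l1w \<nu>F y"
  unfolding in_l1w_def by (simp add: le_less_trans)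

lemma wnorm_apply_le:
  assumes y: "wnorm \<nu>F y \<le> ennreal r" and "0 \<le> r" "0 \<le> W"
    and V: "in_l1w \<nu>F y \<Longrightarrow> wnorm \<nu>F (V y) \<le> ennreal W * wnorm \<nu>F y"
  shows "wnorm \<nu>F (V y) \<le> ennreal (W * r)"
proof -
  have "wnorm \<nu>F (V y) \<le> ennreal W * ennreal r"
    using V[OF in_l1w_if_wnorm_le[OF y]] y by (meson mult_left_mono order_trans zero_le)
  then show ?thesis using assms by (simp add: ennreal_mult)
qed

lemma wnorm_smoothing_apply_le:
  assumes y: "wnorm \<nu>F y \<le> ennreal r" and "0 \<le> r" "0 \<le> W" "0 < d"
    and V: "in_l1w \<nu>F y \<Longrightarrow> ennreal (d powr \<gamma>) * wnorm \<nu>F x \<le> ennreal W * wnorm \<nu>F y"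
  shows "wnorm \<nu>F x \<le> ennreal (W * r * d powr (- \<gamma>))"
proof -
  have "ennreal (d powr \<gamma>) * wnorm \<nu>F x \<le> ennreal W * ennreal r"
    using V[OF in_l1w_if_wnorm_le[OF y]] y by (meson mult_left_mono order_trans zero_le)
  then have "ennreal (d powr \<gamma>) * wnorm \<nu>F x \<le> ennreal (W * r)"
    using assms by (simp add: ennreal_mult)
  then have "ennreal (d powr - \<gamma>) * (ennreal (d powr \<gamma>) * wnorm \<nu>F x)
      \<le> ennreal (d powr - \<gamma>) * ennreal (W * r)"
    by (rule mult_left_mono) simp
  moreover have "ennreal (d powr - \<gamma>) * ennreal (d powr \<gamma>) = 1"
    using \<open>0 < d\<close> by (simp add: ennreal_mult[symmetric] powr_add[symmetric])
  ultimately have "wnorm \<nu>F x \<le> ennreal (d powr - \<gamma>) * ennreal (W * r)"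
    by (simp add: mult.assoc[symmetric])
  also have "\<dots> = ennreal (W * r * d powr (- \<gamma>))"
    using assms by (simp add: ennreal_mult'[symmetric] mult.commute)
  finally show ?thesis .
qed

lemma wnorm_duhamel_integral_le:
  fixes V :: "real \<Rightarrow> 'd::finite seq \<Rightarrow> 'd seq" and Q :: "'d seq \<Rightarrow> 'd seq"
  assumes nu: "0 \<le> \<nu>F" and gam: "0 \<le> \<gamma>" "\<gamma> < 1" and "a \<le> t"
    and nonneg: "0 \<le> WQ" "0 \<le> WP" "0 \<le> b" "0 \<le> c"
    and V_add: "\<And>s y z. s \<in> {a<..<t} \<Longrightarrow> V s (\<lambda>k. y k + z k) = (\<lambda>k. V s y k + V s z k)"
    and V_Q: "\<And>s y. s \<in> {a<..<t} \<Longrightarrow> in_l1w \<nu>F y \<Longrightarrow>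
      ennreal ((t - s) powr \<gamma>) * wnorm \<nu>F (V s (Q y)) \<le> ennreal WQ * wnorm \<nu>F y"
    and V_bound: "\<And>s y. s \<in> {a<..<t} \<Longrightarrow> in_l1w \<nu>F y \<Longrightarrow>
      wnorm \<nu>F (V s y) \<le> ennreal WP * wnorm \<nu>F y"
    and \<psi>: "\<And>s. s \<in> {a<..<t} \<Longrightarrow> wnorm \<nu>F (\<psi> s) \<le> ennreal b"
    and p: "\<And>s. s \<in> {a<..<t} \<Longrightarrow> wnorm \<nu>F (p s) \<le> ennreal c"
  shows "wnorm \<nu>F (\<lambda>k. integral {a..t} (\<lambda>s. V s (\<lambda>m. Q (\<psi> s) m + p s m) k))
    \<le> ennreal (WQ * b * ((t - a) powr (1 - \<gamma>) / (1 - \<gamma>)) + WP * c * (t - a))"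
proof -
  define G where "G s = WQ * b * (t - s) powr (- \<gamma>) + WP * c" for s
  have G_int: "(G has_integral WQ * b * ((t - a) powr (1 - \<gamma>) / (1 - \<gamma>)) + WP * c * (t - a)) {a..t}"
    unfolding G_def
    using has_integral_powr_neg[OF gam \<open>a \<le> t\<close>] has_integral_const_real[of "WP * c" a t] \<open>a \<le> t\<close>
    by (intro has_integral_add has_integral_mult_right) (auto simp: mult.commute)
  have bound: "wnorm \<nu>F (V s (\<lambda>m. Q (\<psi> s) m + p s m)) \<le> ennreal (G s)" if s: "s \<in> {a<..<t}" for s
  proof -
    have "wnorm \<nu>F (V s (\<lambda>m. Q (\<psi> s) m + p s m)) \<le> wnorm \<nu>F (V s (Q (\<psi> s))) + wnorm \<nu>F (V s (p s))"
      unfolding V_add[OF s] by (rule wnorm_add_le[OF nu])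
    also have "\<dots> \<le> ennreal (WQ * b * (t - s) powr (- \<gamma>)) + ennreal (WP * c)"
      using s nonneg
      by (intro add_mono wnorm_smoothing_apply_le[OF \<psi>] wnorm_apply_le[OF p]) (auto intro: V_Q V_bound)
    also have "\<dots> = ennreal (G s)"
      unfolding G_def using nonneg by (simp add: ennreal_plus)
    finally show ?thesis .
  qed
  have "wnorm \<nu>F (\<lambda>k. integral {a..t} (\<lambda>s. V s (\<lambda>m. Q (\<psi> s) m + p s m) k))
      \<le> ennreal (integral {a..t} G)"
    by (rule wnorm_integral_le[OF nu has_integral_integrable[OF G_int] _ bound])
      (simp add: G_def nonneg)
  then show ?thesis by (simp add: integral_unique[OF G_int])
qed

lemma Wprod_self [simp]: "Wprod w j j = 1"
  unfolding Wprod_def by simp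

lemma Wprod_Suc: "k \<le> j \<Longrightarrow> Wprod w (Suc j) k = w (Suc j) * Wprod w j k"
proof -
  assume "k \<le> j"
  then have "{k<..Suc j} = insert (Suc j) {k<..j}" by auto
  then show ?thesis unfolding Wprod_def by simp
qed

lemma Wprod_diff_Suc: "1 \<le> m \<Longrightarrow> m \<le> j \<Longrightarrow> Wprod w j (m - 1) = Wprod w j m * w m"
proof -
  assume "1 \<le> m" "m \<le> j"
  then have "{m - 1<..j} = insert m {m<..j}" by auto
  then show ?thesis unfolding Wprod_def by (simp add: mult.commute)
qed

lemma Wprod_nonneg: "(\<And>m. k < m \<Longrightarrow> m \<le> j \<Longrightarrow> 0 \<le> w m) \<Longrightarrow> 0 \<le> Wprod w j k"
  unfolding Wprod_def by (intro prod_nonneg) auto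

definition duhamel_sum :: "(nat \<Rightarrow> real) \<Rightarrow> (nat \<Rightarrow> real) \<Rightarrow> nat \<Rightarrow> real" where
  "duhamel_sum w f j = (\<Sum>m\<in>{1..j}. Wprod w j m * f m)"

lemma duhamel_sum_Suc: "duhamel_sum w f (Suc j) = w (Suc j) * duhamel_sum w f j + f (Suc j)"
proof -
  have "(\<Sum>m\<in>{1..j}. Wprod w (Suc j) m * f m) = (\<Sum>m\<in>{1..j}. w (Suc j) * (Wprod w j m * f m))"
    by (intro sum.cong) (auto simp: Wprod_Suc)
  then show ?thesis by (simp add: duhamel_sum_def sum.cl_ivl_Suc sum_distrib_left)
qed

lemma duhamel_sum_nonneg:
  "(\<And>m. 1 \<le> m \<Longrightarrow> m \<le> j \<Longrightarrow> 0 \<le> w m \<and> 0 \<le> f m) \<Longrightarrow> 0 \<le> duhamel_sum w f j"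
  unfolding duhamel_sum_def by (intro sum_nonneg mult_nonneg_nonneg Wprod_nonneg) auto

lemma sum_Ml_row: "(\<Sum>m\<in>{1..Suc j}. Ml WS w (Suc j) m) = WS (Suc j) * (1 + duhamel_sum w w j)"
proof -
  have "(\<Sum>m\<in>{1..j}. Wprod w j (m - 1)) = duhamel_sum w w j"
    unfolding duhamel_sum_def by (intro sum.cong refl Wprod_diff_Suc) auto
  then show ?thesis by (simp add: Ml_def sum.cl_ivl_Suc sum_distrib_left[symmetric] algebra_simps)
qed

lemma sum_MX_row:
  "(\<Sum>m\<in>{1..Suc j}. MX th WSq WS w Wq (Suc j) m)
    = WS (Suc j) * duhamel_sum w (\<lambda>m. th m * Wq m) j + th (Suc j) * WSq (Suc j)"
proof -
  have "(\<Sum>m\<in>{1..j}. MX th WSq WS w Wq (Suc j) m) = WS (Suc j) * duhamel_sum w (\<lambda>m. th m * Wq m) j"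
    unfolding duhamel_sum_def sum_distrib_left by (intro sum.cong) (auto simp: MX_def)
  then show ?thesis by (simp add: sum.cl_ivl_Suc MX_def)
qed

lemma sum_MY_row:
  "(\<Sum>m\<in>{1..Suc j}. MY ta WS w W (Suc j) m)
    = WS (Suc j) * duhamel_sum w (\<lambda>m. ta m * W m) j + ta (Suc j) * WS (Suc j)"
proof -
  have "(\<Sum>m\<in>{1..j}. MY ta WS w W (Suc j) m) = WS (Suc j) * duhamel_sum w (\<lambda>m. ta m * W m) j"
    unfolding duhamel_sum_def sum_distrib_left by (intro sum.cong) (auto simp: MY_def)
  then show ?thesis by (simp add: sum.cl_ivl_Suc MY_def)
qed

lemma row_sum_le_infnorm: "i \<in> {1..K} \<Longrightarrow> (\<Sum>j\<in>{1..i}. M i j) \<le> infnorm K M"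
proof -
  assume i: "i \<in> {1..K}"
  have "(\<Sum>j\<in>{1..i}. M i j) \<le> (\<Sum>j\<in>{1..K}. \<bar>M i j\<bar>)"
    using i by (intro order_trans[OF sum_mono sum_mono2]) auto
  also have "\<dots> \<le> infnorm K M" unfolding infnorm_def using i by (intro Max_ge) auto
  finally show ?thesis .
qed

lemma infnorm_pos: "i \<in> {1..K} \<Longrightarrow> j \<in> {1..K} \<Longrightarrow> 0 < M i j \<Longrightarrow> 0 < infnorm K M"
proof -
  assume i: "i \<in> {1..K}" and j: "j \<in> {1..K}" and "0 < M i j"
  have "M i j \<le> \<bar>M i j\<bar>" by simp
  also have "\<dots> \<le> (\<Sum>j\<in>{1..K}. \<bar>M i j\<bar>)" using j by (intro member_le_sum) auto
  also have "\<dots> \<le> infnorm K M" unfolding infnorm_def using i by (intro Max_ge) auto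
  finally show ?thesis using \<open>0 < M i j\<close> by simp
qed

locale piecewise_duhamel =
  fixes \<nu>F \<gamma> :: real and K :: nat and tg :: "nat \<Rightarrow> real"
    and Q :: "'d::finite seq \<Rightarrow> 'd seq"
    and U :: "nat \<Rightarrow> real \<Rightarrow> real \<Rightarrow> 'd seq \<Rightarrow> 'd seq"
    and WS WSq Wend Wendq Wstep :: "nat \<Rightarrow> real"
    and \<phi> :: "nat \<Rightarrow> 'd seq" and \<psi> p :: "nat \<Rightarrow> real \<Rightarrow> 'd seq"
    and a b c :: real
  assumes nu: "0 \<le> \<nu>F"
    and tinc: "\<forall>i<K. tg i < tg (Suc i)"
    and gam: "0 \<le> \<gamma>" "\<gamma> < 1"
    and U_add: "\<forall>i\<in>{1..K}. \<forall>t s. tg (i - 1) \<le> s \<and> s \<le> t \<and> t \<le> tg i \<longrightarrow>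
               (\<forall>y z. U i t s (\<lambda>k. y k + z k) = (\<lambda>k. U i t s y k + U i t s z k))"
    and W_pos: "\<forall>i\<in>{1..K}. WS i > 0 \<and> WSq i > 0 \<and> Wend i > 0 \<and> Wendq i > 0 \<and> Wstep i > 0"
    and B_S: "\<forall>i\<in>{1..K}. \<forall>t s. tg (i - 1) \<le> s \<and> s < t \<and> t \<le> tg i \<longrightarrow>
               (\<forall>y. in_l1w \<nu>F y \<longrightarrow> wnorm \<nu>F (U i t s y) \<le> ennreal (WS i) * wnorm \<nu>F y)"
    and B_Sq: "\<forall>i\<in>{1..K}. \<forall>t s. tg (i - 1) \<le> s \<and> s < t \<and> t \<le> tg i \<longrightarrow>
               (\<forall>y. in_l1w \<nu>F y \<longrightarrow>
                  ennreal ((t - s) powr \<gamma>) * wnorm \<nu>F (U i t s (Q y))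
                    \<le> ennreal (WSq i) * wnorm \<nu>F y)"
    and B_end: "\<forall>i\<in>{1..K}. \<forall>s. tg (i - 1) \<le> s \<and> s < tg i \<longrightarrow>
               (\<forall>y. in_l1w \<nu>F y \<longrightarrow> wnorm \<nu>F (U i (tg i) s y) \<le> ennreal (Wend i) * wnorm \<nu>F y)"
    and B_endq: "\<forall>i\<in>{1..K}. \<forall>s. tg (i - 1) \<le> s \<and> s < tg i \<longrightarrow>
               (\<forall>y. in_l1w \<nu>F y \<longrightarrow>
                  ennreal ((tg i - s) powr \<gamma>) * wnorm \<nu>F (U i (tg i) s (Q y))
                    \<le> ennreal (Wendq i) * wnorm \<nu>F y)"
    and B_step: "\<forall>i\<in>{1..K}. \<forall>y. in_l1w \<nu>F y \<longrightarrow>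
               wnorm \<nu>F (U i (tg i) (tg (i - 1)) y) \<le> ennreal (Wstep i) * wnorm \<nu>F y"
    and bounds_nonneg: "0 \<le> a" "0 \<le> b" "0 \<le> c"
    and \<phi>_le: "\<forall>i\<in>{1..K}. wnorm \<nu>F (\<phi> i) \<le> ennreal a"
    and \<psi>_le: "\<forall>i\<in>{1..K}. \<forall>s\<in>Jint tg i. wnorm \<nu>F (\<psi> i s) \<le> ennreal b"
    and p_le: "\<forall>i\<in>{1..K}. \<forall>s\<in>Jint tg i. wnorm \<nu>F (p i s) \<le> ennreal c"
begin

abbreviation h :: "nat \<Rightarrow> real \<Rightarrow> 'd seq" where
  "h \<equiv> hJ U tg Q \<phi> \<psi> p"

definition endpoint_source :: "nat \<Rightarrow> real" where
  "endpoint_source m = a * Wstep m + b * (tauhat tg \<gamma> m * Wendq m) + c * (tau tg m * Wend m)"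

lemma tau_pos: "j < K \<Longrightarrow> 0 < tau tg (Suc j)"
  using tinc by (simp add: tau_def)

lemma tauhat_pos: "j < K \<Longrightarrow> 0 < tauhat tg \<gamma> (Suc j)"
  unfolding tauhat_def using tau_pos[of j] gam by (intro divide_pos_pos) auto

lemma hJ_Suc_le:
  assumes j: "j < K" and t: "tg j < t" "t \<le> tg (Suc j)"
    and e: "wnorm \<nu>F (h j (tg j)) \<le> ennreal e" "0 \<le> e"
    and W: "0 \<le> W0" "0 \<le> WQ" "0 \<le> WP"
    and U0: "\<And>y. in_l1w \<nu>F y \<Longrightarrow> wnorm \<nu>F (U (Suc j) t (tg j) y) \<le> ennreal W0 * wnorm \<nu>F y"
    and UQ: "\<And>s y. s \<in> {tg j<..<t} \<Longrightarrow> in_l1w \<nu>F y \<Longrightarrow>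
      ennreal ((t - s) powr \<gamma>) * wnorm \<nu>F (U (Suc j) t s (Q y)) \<le> ennreal WQ * wnorm \<nu>F y"
    and UP: "\<And>s y. s \<in> {tg j<..<t} \<Longrightarrow> in_l1w \<nu>F y \<Longrightarrow>
      wnorm \<nu>F (U (Suc j) t s y) \<le> ennreal WP * wnorm \<nu>F y"
  shows "wnorm \<nu>F (h (Suc j) t)
    \<le> ennreal (W0 * (a + e) + WQ * b * ((t - tg j) powr (1 - \<gamma>) / (1 - \<gamma>)) + WP * c * (t - tg j))"
proof -
  have i: "Suc j \<in> {1..K}" using j by simp
  have "wnorm \<nu>F (\<lambda>m. \<phi> (Suc j) m + h j (tg j) m) \<le> ennreal a + ennreal e"
    using \<phi>_le i by (intro order_trans[OF wnorm_add_le[OF nu] add_mono[OF _ e(1)]]) auto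
  then have x: "wnorm \<nu>F (\<lambda>m. \<phi> (Suc j) m + h j (tg j) m) \<le> ennreal (a + e)"
    using bounds_nonneg e by (simp add: ennreal_plus)
  have integral: "wnorm \<nu>F (\<lambda>k. integral {tg j..t}
        (\<lambda>s. U (Suc j) t s (\<lambda>m. Q (\<psi> (Suc j) s) m + p (Suc j) s m) k))
      \<le> ennreal (WQ * b * ((t - tg j) powr (1 - \<gamma>) / (1 - \<gamma>)) + WP * c * (t - tg j))"
  proof (rule wnorm_duhamel_integral_le[OF nu gam _ W(2,3) bounds_nonneg(2,3) _ UQ UP])
    show "U (Suc j) t s (\<lambda>k. y k + z k) = (\<lambda>k. U (Suc j) t s y k + U (Suc j) t s z k)"
      if "s \<in> {tg j<..<t}" for s y z
      using U_add i that t by auto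
    show "wnorm \<nu>F (\<psi> (Suc j) s) \<le> ennreal b" "wnorm \<nu>F (p (Suc j) s) \<le> ennreal c"
      if "s \<in> {tg j<..<t}" for s
      using \<psi>_le p_le i that t by (auto simp: Jint_def)
  qed (use t in auto)
  have "wnorm \<nu>F (h (Suc j) t) \<le> ennreal (W0 * (a + e))
      + ennreal (WQ * b * ((t - tg j) powr (1 - \<gamma>) / (1 - \<gamma>)) + WP * c * (t - tg j))"
    using bounds_nonneg e W
    by (simp only: hJ.simps, intro order_trans[OF wnorm_add_le[OF nu] add_mono[OF _ integral]]
        wnorm_apply_le[OF x] U0) auto
  also have "\<dots> = ennreal (W0 * (a + e)
      + (WQ * b * ((t - tg j) powr (1 - \<gamma>) / (1 - \<gamma>)) + WP * c * (t - tg j)))"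
    using bounds_nonneg e W t gam
    by (intro ennreal_plus[symmetric])
      (auto intro!: add_nonneg_nonneg mult_nonneg_nonneg divide_nonneg_nonneg)
  finally show ?thesis by (simp add: add.assoc)
qed

lemma endpoint_bound_nonneg: "j \<le> K \<Longrightarrow> 0 \<le> duhamel_sum Wstep endpoint_source j"
proof (rule duhamel_sum_nonneg)
  fix m assume "j \<le> K" "1 \<le> m" "m \<le> j"
  then obtain l where m: "m = Suc l" "l < K" by (cases m) auto
  then show "0 \<le> Wstep m \<and> 0 \<le> endpoint_source m"
    using W_pos tau_pos[of l] tauhat_pos[of l] bounds_nonneg
    by (auto simp: endpoint_source_def less_imp_le intro!: add_nonneg_nonneg mult_nonneg_nonneg)
qed

lemma hJ_endpoint_le:
  "j \<le> K \<Longrightarrow> wnorm \<nu>F (h j (tg j)) \<le> ennreal (duhamel_sum Wstep endpoint_source j)"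
proof (induction j)
  case 0
  show ?case by (simp add: wnorm_def)
next
  case (Suc j)
  then have j: "j < K" and i: "Suc j \<in> {1..K}" by auto
  have "wnorm \<nu>F (h (Suc j) (tg (Suc j)))
      \<le> ennreal (Wstep (Suc j) * (a + duhamel_sum Wstep endpoint_source j)
        + Wendq (Suc j) * b * ((tg (Suc j) - tg j) powr (1 - \<gamma>) / (1 - \<gamma>))
        + Wend (Suc j) * c * (tg (Suc j) - tg j))"
  proof (rule hJ_Suc_le[OF j _ order_refl])
    show "wnorm \<nu>F (h j (tg j)) \<le> ennreal (duhamel_sum Wstep endpoint_source j)"
      using Suc j by simp
    show "wnorm \<nu>F (U (Suc j) (tg (Suc j)) (tg j) y) \<le> ennreal (Wstep (Suc j)) * wnorm \<nu>F y"
      if "in_l1w \<nu>F y" for y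
      using B_step[rule_format, of "Suc j" y] i that by simp
    show "ennreal ((tg (Suc j) - s) powr \<gamma>) * wnorm \<nu>F (U (Suc j) (tg (Suc j)) s (Q y))
        \<le> ennreal (Wendq (Suc j)) * wnorm \<nu>F y"
      if "s \<in> {tg j<..<tg (Suc j)}" "in_l1w \<nu>F y" for s y
      using B_endq[rule_format, of "Suc j" s y] i that by simp
    show "wnorm \<nu>F (U (Suc j) (tg (Suc j)) s y) \<le> ennreal (Wend (Suc j)) * wnorm \<nu>F y"
      if "s \<in> {tg j<..<tg (Suc j)}" "in_l1w \<nu>F y" for s y
      using B_end[rule_format, of "Suc j" s y] i that by simp
  qed (use tinc j endpoint_bound_nonneg[of j] W_pos i in \<open>auto simp: less_imp_le\<close>)
  also have "\<dots> = ennreal (duhamel_sum Wstep endpoint_source (Suc j))"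
    by (simp add: duhamel_sum_Suc endpoint_source_def tau_def tauhat_def algebra_simps)
  finally show ?case .
qed

lemma duhamel_sum_endpoint_source:
  "duhamel_sum Wstep endpoint_source j = a * duhamel_sum Wstep Wstep j
    + b * duhamel_sum Wstep (\<lambda>m. tauhat tg \<gamma> m * Wendq m) j
    + c * duhamel_sum Wstep (\<lambda>m. tau tg m * Wend m) j"
  by (simp add: duhamel_sum_def endpoint_source_def sum.distrib sum_distrib_left algebra_simps)

lemma hJ_le_infnorm:
  assumes i: "i \<in> {1..K}" and t: "t \<in> Jint tg i"
  shows "wnorm \<nu>F (h i t) \<le> ennreal (a * infnorm K (Ml WS Wstep)
    + b * infnorm K (MX (tauhat tg \<gamma>) WSq WS Wstep Wendq)
    + c * infnorm K (MY (tau tg) WS Wstep Wend))"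
proof -
  obtain j where ij: "i = Suc j" and j: "j < K" using i by (cases i) auto
  have t': "tg j < t" "t \<le> tg (Suc j)" using t by (auto simp: Jint_def ij)
  have W: "0 < WS i" "0 < WSq i" using W_pos i by auto
  define E where "E = duhamel_sum Wstep endpoint_source j"
  have "wnorm \<nu>F (h i t) \<le> ennreal (WS i * (a + E) + WSq i * b * ((t - tg j) powr (1 - \<gamma>) / (1 - \<gamma>))
      + WS i * c * (t - tg j))"
    unfolding ij E_def
  proof (rule hJ_Suc_le[OF j t' hJ_endpoint_le endpoint_bound_nonneg])
    show "wnorm \<nu>F (U (Suc j) t (tg j) y) \<le> ennreal (WS (Suc j)) * wnorm \<nu>F y"
      if "in_l1w \<nu>F y" for y
      by (rule B_S[rule_format]) (use i t' that ij in auto)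
    show "ennreal ((t - s) powr \<gamma>) * wnorm \<nu>F (U (Suc j) t s (Q y))
        \<le> ennreal (WSq (Suc j)) * wnorm \<nu>F y"
      if "s \<in> {tg j<..<t}" "in_l1w \<nu>F y" for s y
      by (rule B_Sq[rule_format]) (use i t' that ij in auto)
    show "wnorm \<nu>F (U (Suc j) t s y) \<le> ennreal (WS (Suc j)) * wnorm \<nu>F y"
      if "s \<in> {tg j<..<t}" "in_l1w \<nu>F y" for s y
      by (rule B_S[rule_format]) (use i t' that ij in auto)
  qed (use j W ij in auto)
  also have "\<dots> \<le> ennreal (WS i * (a + E) + WSq i * b * tauhat tg \<gamma> i + WS i * c * tau tg i)"
  proof (intro ennreal_leI add_mono order_refl mult_left_mono)
    show "(t - tg j) powr (1 - \<gamma>) / (1 - \<gamma>) \<le> tauhat tg \<gamma> i"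
      unfolding tauhat_def tau_def ij using t' gam by (intro divide_right_mono powr_mono2) auto
    show "t - tg j \<le> tau tg i" using t' by (simp add: tau_def ij)
  qed (use W bounds_nonneg in auto)
  also have "WS i * (a + E) + WSq i * b * tauhat tg \<gamma> i + WS i * c * tau tg i
      = a * (\<Sum>m\<in>{1..i}. Ml WS Wstep i m)
        + b * (\<Sum>m\<in>{1..i}. MX (tauhat tg \<gamma>) WSq WS Wstep Wendq i m)
        + c * (\<Sum>m\<in>{1..i}. MY (tau tg) WS Wstep Wend i m)"
    unfolding ij E_def sum_Ml_row sum_MX_row sum_MY_row duhamel_sum_endpoint_source
    by (simp add: algebra_simps)
  also have "\<dots> \<le> a * infnorm K (Ml WS Wstep) + b * infnorm K (MX (tauhat tg \<gamma>) WSq WS Wstep Wendq)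
      + c * infnorm K (MY (tau tg) WS Wstep Wend)"
    using i bounds_nonneg by (intro add_mono mult_left_mono row_sum_le_infnorm) auto
  finally show ?thesis by (simp add: ennreal_leI)
qed

lemma Max_Xnorm_hJ_le:
  assumes "1 \<le> K"
  shows "Max ((\<lambda>i. Xnorm \<nu>F (Jint tg i) (h i)) ` {1..K}) \<le> ennreal (a * infnorm K (Ml WS Wstep)
    + b * infnorm K (MX (tauhat tg \<gamma>) WSq WS Wstep Wendq)
    + c * infnorm K (MY (tau tg) WS Wstep Wend))"
  using assms by (auto simp: Xnorm_def intro!: SUP_least hJ_le_infnorm)

end

theorem mainTheorem9:
  fixes L :: "'d::finite \<Rightarrow> real" and \<nu>F \<gamma> :: real and q K :: nat
    and tg :: "nat \<Rightarrow> real"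
    and U :: "nat \<Rightarrow> real \<Rightarrow> real \<Rightarrow> 'd seq \<Rightarrow> 'd seq"
    and WS WSq Wend Wendq Wstep :: "nat \<Rightarrow> real"
    and \<phi> :: "nat \<Rightarrow> 'd seq" and \<psi> p :: "nat \<Rightarrow> real \<Rightarrow> 'd seq"
  assumes L_pos: "\<forall>m. L m > 0"
    and nu: "\<nu>F \<ge> 1"
    and q: "q \<in> {0, 2}"
    and K: "K \<ge> 1"
    and t0: "tg 0 = 0"
    and tinc: "\<forall>i<K. tg i < tg (Suc i)"
    and gam: "0 \<le> \<gamma>" "\<gamma> < 1"
    and lin: "\<forall>i\<in>{1..K}. \<forall>t s. tg (i - 1) \<le> s \<and> s \<le> t \<and> t \<le> tg i \<longrightarrow>
               (\<forall>a b. U i t s (\<lambda>k. a k + b k) = (\<lambda>k. U i t s a k + U i t s b k)) \<and>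
               (\<forall>c a. U i t s (\<lambda>k. c * a k) = (\<lambda>k. c * U i t s a k))"
    and U_id: "\<forall>i\<in>{1..K}. \<forall>s. tg (i - 1) \<le> s \<and> s \<le> tg i \<longrightarrow> (\<forall>a. U i s s a = a)"
    and U_cocycle: "\<forall>i\<in>{1..K}. \<forall>t r s. tg (i - 1) \<le> s \<and> s \<le> r \<and> r \<le> t \<and> t \<le> tg i \<longrightarrow>
               (\<forall>a. U i t r (U i r s a) = U i t s a)"
    and W_pos: "\<forall>i\<in>{1..K}. WS i > 0 \<and> WSq i > 0 \<and> Wend i > 0 \<and> Wendq i > 0 \<and> Wstep i > 0"
    and B_S: "\<forall>i\<in>{1..K}. \<forall>t s. tg (i - 1) \<le> s \<and> s < t \<and> t \<le> tg i \<longrightarrow>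
               (\<forall>a. in_l1w \<nu>F a \<longrightarrow> wnorm \<nu>F (U i t s a) \<le> ennreal (WS i) * wnorm \<nu>F a)"
    and B_Sq: "\<forall>i\<in>{1..K}. \<forall>t s. tg (i - 1) \<le> s \<and> s < t \<and> t \<le> tg i \<longrightarrow>
               (\<forall>a. in_l1w \<nu>F a \<longrightarrow>
                  ennreal ((t - s) powr \<gamma>) * wnorm \<nu>F (U i t s (Qop q L a))
                    \<le> ennreal (WSq i) * wnorm \<nu>F a)"
    and B_end: "\<forall>i\<in>{1..K}. \<forall>s. tg (i - 1) \<le> s \<and> s < tg i \<longrightarrow>
               (\<forall>a. in_l1w \<nu>F a \<longrightarrow> wnorm \<nu>F (U i (tg i) s a) \<le> ennreal (Wend i) * wnorm \<nu>F a)"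
    and B_endq: "\<forall>i\<in>{1..K}. \<forall>s. tg (i - 1) \<le> s \<and> s < tg i \<longrightarrow>
               (\<forall>a. in_l1w \<nu>F a \<longrightarrow>
                  ennreal ((tg i - s) powr \<gamma>) * wnorm \<nu>F (U i (tg i) s (Qop q L a))
                    \<le> ennreal (Wendq i) * wnorm \<nu>F a)"
    and B_step: "\<forall>i\<in>{1..K}. \<forall>a. in_l1w \<nu>F a \<longrightarrow>
               wnorm \<nu>F (U i (tg i) (tg (i - 1)) a) \<le> ennreal (Wstep i) * wnorm \<nu>F a"
    and data: "\<forall>i\<in>{1..K}. in_l1w \<nu>F (\<phi> i) \<and> in_C \<nu>F (Jint tg i) (\<psi> i)
                 \<and> in_C \<nu>F (Jint tg i) (p i)"
  shows "Max ((\<lambda>i. Xnorm \<nu>F (Jint tg i) (hJ U tg (Qop q L) \<phi> \<psi> p i)) ` {1..K})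
     \<le> ennreal (infnorm K (Ml WS Wstep)) * Max ((\<lambda>i. wnorm \<nu>F (\<phi> i)) ` {1..K})
       + ennreal (infnorm K (MX (tauhat tg \<gamma>) WSq WS Wstep Wendq))
           * Max ((\<lambda>i. Xnorm \<nu>F (Jint tg i) (\<psi> i)) ` {1..K})
       + ennreal (infnorm K (MY (tau tg) WS Wstep Wend))
           * Max ((\<lambda>i. Xnorm \<nu>F (Jint tg i) (p i)) ` {1..K})"
proof -
  define A where "A = Max ((\<lambda>i. wnorm \<nu>F (\<phi> i)) ` {1..K})"
  define B where "B = Max ((\<lambda>i. Xnorm \<nu>F (Jint tg i) (\<psi> i)) ` {1..K})"
  define C where "C = Max ((\<lambda>i. Xnorm \<nu>F (Jint tg i) (p i)) ` {1..K})"
  \<comment> \<open>Needed because an infinite \<open>\<psi>\<close>- or \<open>p\<close>-norm must make the right-hand side infinite.\<close>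
  have norms_pos: "0 < infnorm K (MX (tauhat tg \<gamma>) WSq WS Wstep Wendq)"
    "0 < infnorm K (MY (tau tg) WS Wstep Wend)"
    using K W_pos tinc gam
    by (auto intro!: infnorm_pos[of 1 K 1] simp: MX_def MY_def tauhat_def tau_def)
  show ?thesis
  proof (cases "B = top \<or> C = top")
    case True
    then show ?thesis
      unfolding B_def[symmetric] C_def[symmetric] using norms_pos by (auto simp: ennreal_mult_top)
  next
    case False
    then obtain b c where b: "0 \<le> b" "B = ennreal b" and c: "0 \<le> c" "C = ennreal c"
      by (metis ennreal_cases)
    have "A \<in> (\<lambda>i. wnorm \<nu>F (\<phi> i)) ` {1..K}" unfolding A_def using K by (intro Max_in) auto
    then have "A \<noteq> top" using data by (auto simp: in_l1w_def)
    then obtain a where a: "0 \<le> a" "A = ennreal a" by (metis ennreal_cases)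
    interpret piecewise_duhamel \<nu>F \<gamma> K tg "Qop q L" U WS WSq Wend Wendq Wstep \<phi> \<psi> p a b c
    proof
      show "\<forall>i\<in>{1..K}. wnorm \<nu>F (\<phi> i) \<le> ennreal a"
        unfolding a(2)[symmetric] A_def by (auto intro: Max_ge)
      show "\<forall>i\<in>{1..K}. \<forall>s\<in>Jint tg i. wnorm \<nu>F (\<psi> i s) \<le> ennreal b"
        using wnorm_le_Max_Xnorm[of "{1..K}" _ _ "Jint tg" \<nu>F \<psi>]
        unfolding B_def[symmetric] b(2) by blast
      show "\<forall>i\<in>{1..K}. \<forall>s\<in>Jint tg i. wnorm \<nu>F (p i s) \<le> ennreal c"
        using wnorm_le_Max_Xnorm[of "{1..K}" _ _ "Jint tg" \<nu>F p]
        unfolding C_def[symmetric] c(2) by blast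
    qed (use nu tinc gam lin W_pos B_S B_Sq B_end B_endq B_step a b c in auto)
    show ?thesis
      using Max_Xnorm_hJ_le[OF K] a b c infnorm_pos[of 1 K 1 "Ml WS Wstep"] K W_pos norms_pos
      by (simp add: A_def B_def C_def Ml_def ennreal_plus ennreal_mult mult.commute)
  qed
qed

end
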